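(* Let $G$ be a finite simple graph and let $P$ be a solvable pebble distribution on $G$. Then $$\sum_{v\in V(G)}\mathrm{ef}(v)P(v)\geq |V(G)|+\mathrm{TE}(P).$$
   Context: A pebble distribution on $G$ is a function $P:V(G)\to\mathbb{Z}_{\geq 0}$. A pebbling move from a vertex $u$ with at least two pebbles to an adjacent vertex $v$ removes two pebbles from $u$ and adds one to $v$. A vertex $v$ is $k$-reachable under $P$ if some executable sequence of pebbling moves (never making a pebble count negative) yields a distribution with at least $k$ pebbles on $v$; reachable means $1$-reachable. $P$ is solvable if every vertex is reachable. $\mathrm{reach}(P,v)$ is the largest $k$ such that $v$ is $k$-reachable under $P$. The excess $\mathrm{exc}(P,v)$ is $\mathrm{reach}(P,v)-1$ if $v$ is reachable and $0$ otherwise; the total excess is $\mathrm{TE}(P)=\sum_{v\in V(G)}\mathrm{exc}(P,v)$. For a vertex $v$, $N_i(v)$ is the set of vertices at distance exactly $i$ from $v$, and the effect of $v$ is $\mathrm{ef}(v)=\sum_{i\geq 0}(1/2)^i|N_i(v)|$. *)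

theory Defs
  imports Complex_Main
begin

definition simple_graph :: "'a set \<Rightarrow> ('a \<Rightarrow> 'a \<Rightarrow> bool) \<Rightarrow> bool" where
  "simple_graph V E \<longleftrightarrow> finite V \<and> (\<forall>u w. E u w \<longrightarrow> u \<in> V \<and> w \<in> V)
     \<and> (\<forall>u w. E u w \<longrightarrow> E w u) \<and> (\<forall>u. \<not> E u u)"

inductive walk :: "'a set \<Rightarrow> ('a \<Rightarrow> 'a \<Rightarrow> bool) \<Rightarrow> nat \<Rightarrow> 'a \<Rightarrow> 'a \<Rightarrow> bool"
  for V E where
  walk0: "u \<in> V \<Longrightarrow> walk V E 0 u u"
| walkS: "walk V E n u w \<Longrightarrow> E w x \<Longrightarrow> walk V E (Suc n) u x"

definition dist_sphere :: "'a set \<Rightarrow> ('a \<Rightarrow> 'a \<Rightarrow> bool) \<Rightarrow> nat \<Rightarrow> 'a \<Rightarrow> 'a set" where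
  "dist_sphere V E i v = {u \<in> V. walk V E i v u \<and> (\<forall>m<i. \<not> walk V E m v u)}"

definition effect :: "'a set \<Rightarrow> ('a \<Rightarrow> 'a \<Rightarrow> bool) \<Rightarrow> 'a \<Rightarrow> real" where
  "effect V E v = (\<Sum>i. (1/2::real) ^ i * real (card (dist_sphere V E i v)))"

definition pebble_move :: "'a set \<Rightarrow> ('a \<Rightarrow> 'a \<Rightarrow> bool) \<Rightarrow> ('a \<Rightarrow> nat) \<Rightarrow> ('a \<Rightarrow> nat) \<Rightarrow> bool" where
  "pebble_move V E P Q \<longleftrightarrow> (\<exists>u w. u \<in> V \<and> w \<in> V \<and> E u w \<and> 2 \<le> P u \<and>
      Q = P(u := P u - 2, w := P w + 1))"

definition pebble_steps :: "'a set \<Rightarrow> ('a \<Rightarrow> 'a \<Rightarrow> bool) \<Rightarrow> ('a \<Rightarrow> nat) \<Rightarrow> ('a \<Rightarrow> nat) \<Rightarrow> bool" where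
  "pebble_steps V E = (pebble_move V E)\<^sup>*\<^sup>*"

definition k_reachable :: "'a set \<Rightarrow> ('a \<Rightarrow> 'a \<Rightarrow> bool) \<Rightarrow> ('a \<Rightarrow> nat) \<Rightarrow> 'a \<Rightarrow> nat \<Rightarrow> bool" where
  "k_reachable V E P v k \<longleftrightarrow> (\<exists>Q. pebble_steps V E P Q \<and> k \<le> Q v)"

definition reachable :: "'a set \<Rightarrow> ('a \<Rightarrow> 'a \<Rightarrow> bool) \<Rightarrow> ('a \<Rightarrow> nat) \<Rightarrow> 'a \<Rightarrow> bool" where
  "reachable V E P v \<longleftrightarrow> k_reachable V E P v 1"

definition solvable :: "'a set \<Rightarrow> ('a \<Rightarrow> 'a \<Rightarrow> bool) \<Rightarrow> ('a \<Rightarrow> nat) \<Rightarrow> bool" where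
  "solvable V E P \<longleftrightarrow> (\<forall>v \<in> V. reachable V E P v)"

definition reach :: "'a set \<Rightarrow> ('a \<Rightarrow> 'a \<Rightarrow> bool) \<Rightarrow> ('a \<Rightarrow> nat) \<Rightarrow> 'a \<Rightarrow> nat" where
  "reach V E P v = (GREATEST k. k_reachable V E P v k)"

definition excess :: "'a set \<Rightarrow> ('a \<Rightarrow> 'a \<Rightarrow> bool) \<Rightarrow> ('a \<Rightarrow> nat) \<Rightarrow> 'a \<Rightarrow> nat" where
  "excess V E P v = (if reachable V E P v then reach V E P v - 1 else 0)"

definition total_excess :: "'a set \<Rightarrow> ('a \<Rightarrow> 'a \<Rightarrow> bool) \<Rightarrow> ('a \<Rightarrow> nat) \<Rightarrow> nat" where
  "total_excess V E P = (\<Sum>v\<in>V. excess V E P v)"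

end

theory Submission
  imports Defs
begin

text \<open>Fix a target vertex u and give each pebble on v the weight 2^-d(v,u) (0 if u cannot be
reached from v). A move from a to a neighbour b spends weight 2 * 2^-d(a,u) and creates at most
2^-d(b,u) \<le> 2^-(d(a,u) - 1), so the total weight never increases; since it dominates the number of
pebbles on u, reach(P,u) is at most the initial weight. Summing over u and exchanging the sums
turns the weights 2^-d(v,u) into ef(v).\<close>

definition graph_dist :: "'a set \<Rightarrow> ('a \<Rightarrow> 'a \<Rightarrow> bool) \<Rightarrow> 'a \<Rightarrow> 'a \<Rightarrow> nat" where
  "graph_dist V E v u = (LEAST n. walk V E n v u)"

definition dist_weight :: "'a set \<Rightarrow> ('a \<Rightarrow> 'a \<Rightarrow> bool) \<Rightarrow> 'a \<Rightarrow> 'a \<Rightarrow> real" where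
  "dist_weight V E v u = (if \<exists>n. walk V E n v u then (1/2) ^ graph_dist V E v u else 0)"

definition pebble_weight :: "'a set \<Rightarrow> ('a \<Rightarrow> 'a \<Rightarrow> bool) \<Rightarrow> ('a \<Rightarrow> nat) \<Rightarrow> 'a \<Rightarrow> real" where
  "pebble_weight V E P u = (\<Sum>v\<in>V. dist_weight V E v u * real (P v))"

lemma walk_graph_dist:
  assumes "walk V E n v u"
  shows "walk V E (graph_dist V E v u) v u" and "graph_dist V E v u \<le> n"
  using assms unfolding graph_dist_def by (auto intro: LeastI Least_le)

lemma walk_Cons:
  assumes "walk V E n b u" "E a b" "a \<in> V"
  shows "walk V E (Suc n) a u"
  using assms by (induction rule: walk.induct) (auto intro: walk.intros)

lemma dist_weight_nonneg: "0 \<le> dist_weight V E v u"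
  by (simp add: dist_weight_def)

lemma dist_weight_self:
  assumes "u \<in> V"
  shows "dist_weight V E u u = 1"
proof -
  have "walk V E 0 u u" using assms by (rule walk0)
  then show ?thesis using walk_graph_dist(2) by (fastforce simp: dist_weight_def)
qed

lemma dist_weight_neighbour_le:
  assumes "E a b" "a \<in> V"
  shows "dist_weight V E b u \<le> 2 * dist_weight V E a u"
proof (cases "\<exists>n. walk V E n b u")
  case True
  then have "walk V E (graph_dist V E b u) b u" by (blast intro: walk_graph_dist)
  then have walk_a: "walk V E (Suc (graph_dist V E b u)) a u"
    using assms by (rule walk_Cons)
  then have "(1/2::real) ^ Suc (graph_dist V E b u) \<le> (1/2) ^ graph_dist V E a u"
    by (intro power_decreasing walk_graph_dist(2)) auto
  then show ?thesis using True walk_a by (auto simp: dist_weight_def)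
qed (simp add: dist_weight_def)

lemma pebble_weight_move_le:
  assumes "simple_graph V E" and "pebble_move V E P Q"
  shows "pebble_weight V E Q u \<le> pebble_weight V E P u"
proof -
  obtain a b where ab: "a \<in> V" "b \<in> V" "E a b" "2 \<le> P a"
    and Q: "Q = P(a := P a - 2, b := P b + 1)"
    using assms(2) unfolding pebble_move_def by blast
  have "finite V" "a \<noteq> b" using assms(1) ab(3) unfolding simple_graph_def by auto
  then have real_Q:
    "\<And>v. real (Q v) = real (P v) - (if v = a then 2 else 0) + (if v = b then 1 else 0)"
    using ab(4) by (auto simp: Q of_nat_diff)
  have "pebble_weight V E Q u = (\<Sum>v\<in>V. dist_weight V E v u * real (P v)
      - (if v = a then 2 * dist_weight V E v u else 0) + (if v = b then dist_weight V E v u else 0))"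
    unfolding pebble_weight_def by (intro sum.cong) (auto simp: real_Q algebra_simps)
  also have "\<dots> = pebble_weight V E P u - 2 * dist_weight V E a u + dist_weight V E b u"
    using \<open>finite V\<close> ab(1,2) by (simp add: sum.distrib sum_subtractf pebble_weight_def)
  also have "\<dots> \<le> pebble_weight V E P u"
    using dist_weight_neighbour_le[of E a b V u] ab by simp
  finally show ?thesis .
qed

lemma pebble_weight_steps_le:
  assumes "simple_graph V E" and "pebble_steps V E P Q"
  shows "pebble_weight V E Q u \<le> pebble_weight V E P u"
  using assms(2) unfolding pebble_steps_def
proof induction
  case (step Q R)
  then show ?case using pebble_weight_move_le[OF assms(1), of Q R u] by linarith
qed simp

lemma pebbles_le_pebble_weight:
  assumes "finite V" and "u \<in> V"
  shows "real (P u) \<le> pebble_weight V E P u"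
proof -
  have "real (P u) = dist_weight V E u u * real (P u)"
    using assms(2) by (simp add: dist_weight_self)
  also have "\<dots> \<le> pebble_weight V E P u"
    unfolding pebble_weight_def using assms by (intro member_le_sum) (auto simp: dist_weight_nonneg)
  finally show ?thesis .
qed

lemma k_reachable_le_pebble_weight:
  assumes "simple_graph V E" and "u \<in> V" and "k_reachable V E P u k"
  shows "real k \<le> pebble_weight V E P u"
proof -
  obtain Q where "pebble_steps V E P Q" "k \<le> Q u"
    using assms(3) by (auto simp: k_reachable_def)
  moreover have "finite V" using assms(1) by (simp add: simple_graph_def)
  ultimately show ?thesis
    using pebble_weight_steps_le[OF assms(1)] pebbles_le_pebble_weight[OF _ assms(2)]
    by (meson of_nat_le_iff order_trans)
qed

lemma reach_le_pebble_weight: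
  assumes "simple_graph V E" and "u \<in> V" and "reachable V E P u"
  shows "1 \<le> reach V E P u" and "real (reach V E P u) \<le> pebble_weight V E P u"
proof -
  have one: "k_reachable V E P u 1" using assms(3) by (simp add: reachable_def)
  have bounded: "\<forall>k. k_reachable V E P u k \<longrightarrow> k \<le> nat \<lceil>pebble_weight V E P u\<rceil>"
    using k_reachable_le_pebble_weight[OF assms(1,2)]
    by (meson of_nat_le_iff order_trans real_nat_ceiling_ge)
  show "1 \<le> reach V E P u"
    unfolding reach_def using one bounded by (blast intro: Greatest_le_nat)
  have "k_reachable V E P u (reach V E P u)"
    unfolding reach_def using one bounded by (blast intro: GreatestI_nat)
  then show "real (reach V E P u) \<le> pebble_weight V E P u"
    by (rule k_reachable_le_pebble_weight[OF assms(1,2)])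
qed

lemma dist_sphere_eq_graph_dist:
  "dist_sphere V E i v = {u \<in> V. (\<exists>n. walk V E n v u) \<and> graph_dist V E v u = i}"
  unfolding dist_sphere_def graph_dist_def
  by (auto intro!: Least_equality intro: LeastI dest: not_less_Least simp: not_less[symmetric])

lemma effect_eq_sum_dist_weight:
  assumes "finite V"
  shows "effect V E v = (\<Sum>u\<in>V. dist_weight V E v u)"
proof -
  define A where "A = {u \<in> V. \<exists>n. walk V E n v u}"
  have "finite A" using assms by (simp add: A_def)
  have sphere: "dist_sphere V E i v = {u \<in> A. graph_dist V E v u = i}" for i
    by (auto simp: A_def dist_sphere_eq_graph_dist)
  have "effect V E v
      = (\<Sum>i\<in>graph_dist V E v ` A. (1/2::real) ^ i * real (card (dist_sphere V E i v)))"
    unfolding effect_def using \<open>finite A\<close> by (intro suminf_finite) (auto simp: sphere)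
  also have "\<dots> = (\<Sum>i\<in>graph_dist V E v ` A.
      \<Sum>u\<in>{u \<in> A. graph_dist V E v u = i}. (1/2::real) ^ graph_dist V E v u)"
    by (intro sum.cong) (auto simp: sphere)
  also have "\<dots> = (\<Sum>u\<in>A. (1/2::real) ^ graph_dist V E v u)"
    using \<open>finite A\<close> by (rule sum.image_gen[symmetric])
  also have "\<dots> = (\<Sum>u\<in>V. dist_weight V E v u)"
    using assms by (simp add: A_def dist_weight_def sum.If_cases Int_def)
  finally show ?thesis .
qed

theorem theorem2p1:
  fixes V :: "'a set" and E :: "'a \<Rightarrow> 'a \<Rightarrow> bool" and P :: "'a \<Rightarrow> nat"
  assumes "simple_graph V E"
    and "solvable V E P"
  shows "(\<Sum>v\<in>V. effect V E v * real (P v)) \<ge> real (card V) + real (total_excess V E P)"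
proof -
  have "finite V" using assms(1) by (simp add: simple_graph_def)
  have reachable: "reachable V E P u" if "u \<in> V" for u
    using assms(2) that by (simp add: solvable_def)
  have "real (card V) + real (total_excess V E P) = (\<Sum>u\<in>V. 1 + real (excess V E P u))"
    by (simp add: total_excess_def sum.distrib)
  also have "\<dots> = (\<Sum>u\<in>V. real (reach V E P u))"
    using reach_le_pebble_weight(1)[OF assms(1) _ reachable] reachable
    by (intro sum.cong) (auto simp: excess_def of_nat_diff)
  also have "\<dots> \<le> (\<Sum>u\<in>V. pebble_weight V E P u)"
    using reach_le_pebble_weight(2)[OF assms(1) _ reachable] by (intro sum_mono)
  also have "\<dots> = (\<Sum>v\<in>V. \<Sum>u\<in>V. dist_weight V E v u * real (P v))"
    unfolding pebble_weight_def by (rule sum.swap)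
  also have "\<dots> = (\<Sum>v\<in>V. effect V E v * real (P v))"
    using \<open>finite V\<close> by (simp add: effect_eq_sum_dist_weight sum_distrib_right)
  finally show ?thesis .
qed

end
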